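(* Let $\Omega$ be a topological space and suppose that for every space $\Omega'$ homeomorphic to $\Omega$ a family $\mathcal{K}(\Omega')$ of subsets of $\Omega'$ is given such that: (AX1) if $\Omega_1\cong\Omega_2\cong\Omega$ and $h\colon\Omega_1\to\Omega_2$ is a homeomorphism, then for every $A\subset\Omega_1$, $A\in\mathcal{K}(\Omega_1)$ iff $h(A)\in\mathcal{K}(\Omega_2)$; (AX2) if $K_1,K_2\in\mathcal{K}(\Omega)$ and $K_1\cong K_2$, then there is a homeomorphism of $\Omega$ onto $\Omega$ mapping $K_1$ onto $K_2$. Suppose further that for all $K,L\in\mathcal{K}(\Omega)$ and $f\in\mathcal{C}(K,L)$ there are given a topological space $\Lambda(K)$, a map $\Lambda(f)\in\mathcal{C}(\Lambda(K),\Lambda(L))$ and a topological embedding $\delta_K\colon K\to\Lambda(K)$ such that: ($\Lambda$1) $\Lambda(\mathrm{id}_K)=\mathrm{id}_{\Lambda(K)}$ and $\Lambda(g\circ f)=\Lambda(g)\circ\Lambda(f)$ whenever the composition makes sense; ($\Lambda$2) $\Lambda(K)\cong\Omega$ and $\delta_K(K)\in\mathcal{K}(\Lambda(K))$ for each $K\in\mathcal{K}(\Omega)$; ($\Lambda$3) $\Lambda(f)\circ\delta_K=\delta_L\circ f$ for all $K,L\in\mathcal{K}(\Omega)$, $f\in\mathcal{C}(K,L)$. Then there is an assignment, defined for all $K,L\in\mathcal{K}(\Omega)$ and $\varphi\in\mathcal{C}(K,L)$, $(\varphi,L)\mapsto\widehat{\varphi}_L\in\mathcal{C}(\Omega,\Omega)$,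 such that $\widehat{\varphi}_L$ extends $\varphi$, $\widehat{\mathrm{id}_L}_L=\mathrm{id}_\Omega$ and $\widehat{(\psi\circ\varphi)}_M=\widehat\psi_M\circ\widehat\varphi_L$ for $\psi\in\mathcal{C}(L,M)$, $M\in\mathcal{K}(\Omega)$. If moreover $\Omega$ is metrizable and for each $K\in\mathcal{K}(\Omega)$ there is an assignment $\operatorname{Metr}(K)\ni d\mapsto\Lambda(d)\in\operatorname{Metr}(\Lambda(K))$ such that ($\Lambda$4) $d(x,y)=\Lambda(d)(\delta_K(x),\delta_K(y))$ for $x,y\in K$, and ($\Lambda$5) for all $K,L\in\mathcal{K}(\Omega)$ and $\varrho\in\operatorname{Metr}(L)$ the map $(\mathcal{C}(K,L),\varrho_{\sup})\ni\psi\mapsto\Lambda(\psi)\in(\mathcal{C}(\Lambda(K),\Lambda(L)),\Lambda(\varrho)_{\sup})$ is isometric, then for every $L\in\mathcal{K}(\Omega)$ and $d\in\operatorname{Metr}(L)$ there is $\widehat d\in\operatorname{Metr}(\Omega)$ extending $d$ such that for every $K\in\mathcal{K}(\Omega)$ the map $(\mathcal{C}(K,L),d_{\sup})\ni\varphi\mapsto\widehat\varphi_L\in(\mathcal{C}(\Omega,\Omega),\widehat d_{\sup})$ is isometric.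
   Context: $\mathcal{C}(X,Y)$ denotes the set of continuous maps $X\to Y$; $\operatorname{Metr}(X)$ denotes the set of all compatible (i.e. inducing the topology) bounded metrics on a metrizable space $X$; for a metric $d$ on $Y$, $d_{\sup}(f,g)=\sup_x d(f(x),g(x))$. *)

theory Defs
  imports "HOL-Analysis.Analysis"
begin

text \<open>C(K,L) for subsets K, L of the space Om (with subspace topologies);
  maps are represented extensionally (value undefined outside K), so that
  HOL functions correspond exactly to set-theoretic maps K -> L.\<close>
definition cmaps :: "'a topology \<Rightarrow> 'a set \<Rightarrow> 'a set \<Rightarrow> ('a \<Rightarrow> 'a) set" where
  "cmaps Om K L = {f. continuous_map (subtopology Om K) (subtopology Om L) f \<and> f \<in> extensional K}"

definition Metr :: "'a topology \<Rightarrow> ('a \<Rightarrow> 'a \<Rightarrow> real) set" where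
  "Metr X = {d. Metric_space (topspace X) d
              \<and> Metric_space.mtopology (topspace X) d = X
              \<and> (\<exists>B. \<forall>x\<in>topspace X. \<forall>y\<in>topspace X. d x y \<le> B)}"

definition sup_dist :: "('b \<Rightarrow> 'b \<Rightarrow> real) \<Rightarrow> 'a set \<Rightarrow> ('a \<Rightarrow> 'b) \<Rightarrow> ('a \<Rightarrow> 'b) \<Rightarrow> real" where
  "sup_dist d S f g = (if S = {} then 0 else (SUP x\<in>S. d (f x) (g x)))"

end

theory Submission
  imports Defs
begin

(* The whole theorem rests on one construction: for every L in K(Om) there is
   a homeomorphism  T_L : Om -> Lam(L)  that extends the embedding delta_L.  To get it, one
   first transports delta_L(L) back to Om along some homeomorphism Lam(L) ~ Om (AX1) and uses
   AX2 to find a homeomorphism Phi : Om -> Lam(L) with Phi(L) = delta_L(L).  Phi and delta_L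
   then differ on L by a self-homeomorphism w of L, and since the functor Lam maps
   self-homeomorphisms of L to self-homeomorphisms of Lam(L), correcting Phi by Lam(w^-1)
   yields T_L.  The extension operator is  hat K L phi = T_L^-1 o Lam(phi) o T_K,  whose
   functoriality is inherited from Lam, and the extended metric is the pullback of Lam(d)
   along T_L; the isometry property follows from (Lam5) because T_K is onto Lam(K). *)

lemma Metr_pullback:
  assumes rho: "rho \<in> Metr Y" and hom: "homeomorphic_map X Y H"
  shows "(\<lambda>x y. rho (H x) (H y)) \<in> Metr X"
proof -
  define dh where "dh = (\<lambda>x y. rho (H x) (H y))"
  have MY: "Metric_space (topspace Y) rho" and TY: "Metric_space.mtopology (topspace Y) rho = Y"
    and BY: "\<exists>B. \<forall>x\<in>topspace Y. \<forall>y\<in>topspace Y. rho x y \<le> B"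
    using rho by (auto simp: Metr_def)
  have onto: "H ` topspace X = topspace Y" and inj: "inj_on H (topspace X)"
    using hom homeomorphic_imp_surjective_map homeomorphic_imp_injective_map by blast+
  then have Hin: "\<And>x. x \<in> topspace X \<Longrightarrow> H x \<in> topspace Y" by blast
  have MX: "Metric_space (topspace X) dh"
  proof
    fix x y z
    show "0 \<le> dh x y" "dh x y = dh y x"
      using MY by (simp_all add: dh_def Metric_space.nonneg Metric_space.commute)
    show "x \<in> topspace X \<Longrightarrow> y \<in> topspace X \<Longrightarrow> (dh x y = 0) = (x = y)"
      using MY Hin inj unfolding dh_def by (metis Metric_space.zero inj_onD)
    show "x \<in> topspace X \<Longrightarrow> y \<in> topspace X \<Longrightarrow> z \<in> topspace X \<Longrightarrow> dh x z \<le> dh x y + dh y z"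
      using MY Hin unfolding dh_def by (blast intro: Metric_space.triangle)
  qed
  text \<open>H is an isometry onto Y, hence a homeomorphism from the metric topology of dh to Y;
    as H is also a homeomorphism from X, the two topologies on topspace X coincide.\<close>
  have hom_metric: "homeomorphic_map (Metric_space.mtopology (topspace X) dh) Y H"
    using Metric_space12.isometry_imp_homeomorphic_map[of "topspace X" dh "topspace Y" rho H]
      MX MY onto TY by (simp add: Metric_space12_def dh_def)
  have top: "topspace (Metric_space.mtopology (topspace X) dh) = topspace X"
    using MX Metric_space.topspace_mtopology by blast
  have "Metric_space.mtopology (topspace X) dh = X"
    unfolding topology_eq
  proof
    fix S
    show "openin (Metric_space.mtopology (topspace X) dh) S = openin X S"
    proof (cases "S \<subseteq> topspace X")
      case True
      then show ?thesis
        using homeomorphic_map_openness[OF hom_metric] homeomorphic_map_openness[OF hom] top by metis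
    next
      case False
      then show ?thesis using openin_subset top by metis
    qed
  qed
  moreover have "\<exists>B. \<forall>x\<in>topspace X. \<forall>y\<in>topspace X. dh x y \<le> B"
    using BY Hin unfolding dh_def by meson
  ultimately show ?thesis using MX by (simp add: Metr_def dh_def)
qed

lemma sup_dist_reindex:
  assumes onto: "H ` S = T"
    and pointwise: "\<And>x. x \<in> S \<Longrightarrow> d (f x) (g x) = d' (f' (H x)) (g' (H x))"
  shows "sup_dist d S f g = sup_dist d' T f' g'"
proof -
  have "(SUP x\<in>S. d (f x) (g x)) = (SUP x\<in>S. d' (f' (H x)) (g' (H x)))"
    using pointwise by (rule SUP_cong[OF refl])
  also have "\<dots> = (SUP y\<in>T. d' (f' y) (g' y))"
    unfolding onto[symmetric] image_image ..
  finally show ?thesis using onto by (auto simp: sup_dist_def)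
qed

lemma restrict_in_cmaps:
  assumes "continuous_map (subtopology Om K) (subtopology Om L) f"
  shows "restrict f K \<in> cmaps Om K L"
  using continuous_map_eq[OF assms, of "restrict f K"] by (auto simp: cmaps_def)

lemma homeomorphic_maps_inv_into:
  assumes "homeomorphic_map X Y f"
  shows "homeomorphic_maps X Y f (inv_into (topspace X) f)"
proof -
  obtain g where g: "homeomorphic_maps X Y f g"
    using assms homeomorphic_map_maps by blast
  have "g y = inv_into (topspace X) f y" if "y \<in> topspace Y" for y
    using g that homeomorphic_imp_injective_map[OF assms]
    by (metis (no_types, lifting) homeomorphic_maps_map homeomorphic_imp_surjective_map
        image_eqI inv_into_f_f)
  then show ?thesis using homeomorphic_maps_eq[OF g] by blast
qed

locale functorial_extension =
  fixes Om :: "'a topology"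
    and KK :: "'a topology \<Rightarrow> 'a set set"
    and LamT :: "'a set \<Rightarrow> 'a topology"
    and LamM :: "'a set \<Rightarrow> 'a set \<Rightarrow> ('a \<Rightarrow> 'a) \<Rightarrow> ('a \<Rightarrow> 'a)"
    and delta :: "'a set \<Rightarrow> 'a \<Rightarrow> 'a"
  assumes KK_sub: "\<And>Om'. Om' homeomorphic_space Om \<Longrightarrow> KK Om' \<subseteq> Pow (topspace Om')"
    and AX1: "\<And>Om1 Om2 h A. Om1 homeomorphic_space Om \<Longrightarrow> Om2 homeomorphic_space Om \<Longrightarrow>
              homeomorphic_map Om1 Om2 h \<Longrightarrow> A \<subseteq> topspace Om1 \<Longrightarrow>
              (A \<in> KK Om1 \<longleftrightarrow> h ` A \<in> KK Om2)"
    and AX2: "\<And>K1 K2. K1 \<in> KK Om \<Longrightarrow> K2 \<in> KK Om \<Longrightarrow>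
              subtopology Om K1 homeomorphic_space subtopology Om K2 \<Longrightarrow>
              \<exists>h. homeomorphic_map Om Om h \<and> h ` K1 = K2"
    and Lam_cont: "\<And>K L f. K \<in> KK Om \<Longrightarrow> L \<in> KK Om \<Longrightarrow> f \<in> cmaps Om K L \<Longrightarrow>
              continuous_map (LamT K) (LamT L) (LamM K L f)"
    and delta_emb: "\<And>K. K \<in> KK Om \<Longrightarrow> embedding_map (subtopology Om K) (LamT K) (delta K)"
    and Lam1_id: "\<And>K x. K \<in> KK Om \<Longrightarrow> x \<in> topspace (LamT K) \<Longrightarrow>
              LamM K K (restrict id K) x = x"
    and Lam1_comp: "\<And>K L M f g x. K \<in> KK Om \<Longrightarrow> L \<in> KK Om \<Longrightarrow> M \<in> KK Om \<Longrightarrow>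
              f \<in> cmaps Om K L \<Longrightarrow> g \<in> cmaps Om L M \<Longrightarrow> x \<in> topspace (LamT K) \<Longrightarrow>
              LamM K M (restrict (g \<circ> f) K) x = LamM L M g (LamM K L f x)"
    and Lam2: "\<And>K. K \<in> KK Om \<Longrightarrow>
              LamT K homeomorphic_space Om \<and> delta K ` K \<in> KK (LamT K)"
    and Lam3: "\<And>K L f x. K \<in> KK Om \<Longrightarrow> L \<in> KK Om \<Longrightarrow> f \<in> cmaps Om K L \<Longrightarrow> x \<in> K \<Longrightarrow>
              LamM K L f (delta K x) = delta L (f x)"
begin

lemma KK_subset: "K \<in> KK Om \<Longrightarrow> K \<subseteq> topspace Om"
  using KK_sub[OF homeomorphic_space_refl] by blast

lemma Lam_maps_into:
  "\<lbrakk>K \<in> KK Om; L \<in> KK Om; f \<in> cmaps Om K L; y \<in> topspace (LamT K)\<rbrakk>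
    \<Longrightarrow> LamM K L f y \<in> topspace (LamT L)"
  using Lam_cont[of K L f] by (simp add: continuous_map_def Pi_iff)

lemma topspace_subtopology_KK: "L \<in> KK Om \<Longrightarrow> topspace (subtopology Om L) = L"
  using KK_subset by auto

lemma delta_homeomorphic:
  "L \<in> KK Om \<Longrightarrow> homeomorphic_map (subtopology Om L) (subtopology (LamT L) (delta L ` L)) (delta L)"
  using delta_emb unfolding embedding_map_def by (metis topspace_subtopology_KK)

lemma delta_image_subset: "L \<in> KK Om \<Longrightarrow> delta L ` L \<subseteq> topspace (LamT L)"
  using homeomorphic_imp_surjective_map[OF delta_homeomorphic] topspace_subtopology_KK
  by (metis le_inf_iff order_refl topspace_subtopology)

lemma Lam_homeomorphic_maps:
  assumes L: "L \<in> KK Om" and w: "homeomorphic_maps (subtopology Om L) (subtopology Om L) w w'"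
  shows "homeomorphic_maps (LamT L) (LamT L) (LamM L L (restrict w L)) (LamM L L (restrict w' L))"
proof -
  have topL: "topspace (subtopology Om L) = L" using topspace_subtopology_KK[OF L] .
  have wC: "restrict w L \<in> cmaps Om L L" and w'C: "restrict w' L \<in> cmaps Om L L"
    using w by (auto simp: homeomorphic_maps_def intro: restrict_in_cmaps)
  have inverse: "restrict (restrict w L \<circ> restrict w' L) L = restrict id L"
                "restrict (restrict w' L \<circ> restrict w L) L = restrict id L"
    using w topL by (auto simp: homeomorphic_maps_def continuous_map_def Pi_iff)
  show ?thesis unfolding homeomorphic_maps_def
    using Lam_cont[OF L L wC] Lam_cont[OF L L w'C]
      Lam1_comp[OF L L L wC w'C] Lam1_comp[OF L L L w'C wC] Lam1_id[OF L] inverse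
    by simp
qed

lemma homeomorphism_onto_delta_image:
  assumes L: "L \<in> KK Om"
  obtains Phi where "homeomorphic_map Om (LamT L) Phi" "Phi ` L = delta L ` L"
proof -
  have hsp: "LamT L homeomorphic_space Om" and dK: "delta L ` L \<in> KK (LamT L)"
    using Lam2[OF L] by auto
  then obtain h h' where hh: "homeomorphic_maps (LamT L) Om h h'"
    unfolding homeomorphic_space_def by blast
  have dsub: "delta L ` L \<subseteq> topspace (LamT L)" using delta_image_subset[OF L] .
  define L' where "L' = h ` delta L ` L"
  have L'K: "L' \<in> KK Om"
    using AX1[OF hsp homeomorphic_space_refl homeomorphic_maps_imp_map[OF hh] dsub] dK
    by (simp add: L'_def)
  have "h ` (topspace (LamT L) \<inter> delta L ` L) = topspace Om \<inter> L'"
    using KK_subset[OF L'K] dsub by (auto simp: L'_def)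
  then have "homeomorphic_map (subtopology (LamT L) (delta L ` L)) (subtopology Om L') h"
    using homeomorphic_map_subtopologies homeomorphic_maps_imp_map[OF hh] by blast
  then have "subtopology Om L homeomorphic_space subtopology Om L'"
    using delta_homeomorphic[OF L] homeomorphic_map_compose homeomorphic_space by blast
  then obtain g where g: "homeomorphic_map Om Om g" and gL: "g ` L = L'"
    using AX2[OF L L'K] by blast
  have "h' ` L' = delta L ` L"
    using hh dsub unfolding L'_def homeomorphic_maps_def by (auto simp: image_iff subset_eq)
  moreover have "homeomorphic_map Om (LamT L) (h' \<circ> g)"
    using g hh homeomorphic_map_compose homeomorphic_maps_map by blast
  ultimately show ?thesis using gL that by (metis image_comp)
qed

text \<open>Correcting such a homeomorphism by Lam of a self-homeomorphism of L gives a
  homeomorphism of Om onto Lam(L) that extends delta L.\<close>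
lemma homeomorphism_extending_delta:
  assumes L: "L \<in> KK Om"
  shows "\<exists>T. homeomorphic_map Om (LamT L) T \<and> (\<forall>x\<in>L. T x = delta L x)"
proof -
  obtain Phi where Phi: "homeomorphic_map Om (LamT L) Phi" and PhiL: "Phi ` L = delta L ` L"
    using homeomorphism_onto_delta_image[OF L] .
  let ?L = "subtopology Om L" and ?D = "subtopology (LamT L) (delta L ` L)"
  have topL: "topspace ?L = L" using topspace_subtopology_KK[OF L] .
  have "homeomorphic_map ?L ?D Phi"
    using homeomorphic_map_subtopologies[OF Phi] PhiL delta_image_subset[OF L] KK_subset[OF L]
    by (simp add: Int_absorb1 Int_absorb2)
  then obtain Phi' where Phi': "homeomorphic_maps ?L ?D Phi Phi'"
    using homeomorphic_map_maps by blast
  obtain delta' where delta': "homeomorphic_maps ?L ?D (delta L) delta'"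
    using delta_homeomorphic[OF L] homeomorphic_map_maps by blast
  define w where "w = delta' \<circ> Phi"
  define w' where "w' = Phi' \<circ> delta L"
  have w: "homeomorphic_maps ?L ?L w w'"
    unfolding w_def w'_def
    using homeomorphic_maps_compose Phi' delta' homeomorphic_maps_sym by blast
  have Phi_delta: "Phi x = delta L (w x)" and ww': "w' (w x) = x" and wL: "w x \<in> L"
    if "x \<in> L" for x
    using that Phi' delta' w topL unfolding w_def homeomorphic_maps_def continuous_map_def
    by (auto simp: Pi_iff)
  have w'C: "restrict w' L \<in> cmaps Om L L"
    using w by (auto simp: homeomorphic_maps_def intro: restrict_in_cmaps)
  define T where "T = LamM L L (restrict w' L) \<circ> Phi"
  have "homeomorphic_map Om (LamT L) T"
    unfolding T_def using Lam_homeomorphic_maps[OF L w] Phi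
    by (meson homeomorphic_map_compose homeomorphic_maps_map)
  moreover have "T x = delta L x" if x: "x \<in> L" for x
    using Lam3[OF L L w'C wL[OF x]] Phi_delta[OF x] ww'[OF x] wL[OF x] by (simp add: T_def)
  ultimately show ?thesis by blast
qed

definition transfer :: "'a set \<Rightarrow> 'a \<Rightarrow> 'a" where
  "transfer L = (SOME T. homeomorphic_map Om (LamT L) T \<and> (\<forall>x\<in>L. T x = delta L x))"

definition untransfer :: "'a set \<Rightarrow> 'a \<Rightarrow> 'a" where
  "untransfer L = inv_into (topspace Om) (transfer L)"

lemma transfer:
  assumes "L \<in> KK Om"
  shows "homeomorphic_maps Om (LamT L) (transfer L) (untransfer L)"
    and "transfer L ` topspace Om = topspace (LamT L)"
    and "\<And>x. x \<in> L \<Longrightarrow> transfer L x = delta L x"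
proof -
  have T: "homeomorphic_map Om (LamT L) (transfer L) \<and> (\<forall>x\<in>L. transfer L x = delta L x)"
    unfolding transfer_def using someI_ex[OF homeomorphism_extending_delta[OF assms]] .
  then show "homeomorphic_maps Om (LamT L) (transfer L) (untransfer L)"
    and "transfer L ` topspace Om = topspace (LamT L)"
    and "\<And>x. x \<in> L \<Longrightarrow> transfer L x = delta L x"
    unfolding untransfer_def using homeomorphic_maps_inv_into homeomorphic_imp_surjective_map by blast+
qed

lemma transfer_into: "L \<in> KK Om \<Longrightarrow> x \<in> topspace Om \<Longrightarrow> transfer L x \<in> topspace (LamT L)"
  using transfer(2) by blast

lemma transfer_untransfer:
  "L \<in> KK Om \<Longrightarrow> y \<in> topspace (LamT L) \<Longrightarrow> transfer L (untransfer L y) = y"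
  and untransfer_transfer:
  "L \<in> KK Om \<Longrightarrow> x \<in> topspace Om \<Longrightarrow> untransfer L (transfer L x) = x"
  using transfer(1) by (auto simp: homeomorphic_maps_def)

definition hat :: "'a set \<Rightarrow> 'a set \<Rightarrow> ('a \<Rightarrow> 'a) \<Rightarrow> 'a \<Rightarrow> 'a" where
  "hat K L \<phi> = untransfer L \<circ> LamM K L \<phi> \<circ> transfer K"

lemma hat_continuous:
  "\<lbrakk>K \<in> KK Om; L \<in> KK Om; \<phi> \<in> cmaps Om K L\<rbrakk> \<Longrightarrow> continuous_map Om Om (hat K L \<phi>)"
  unfolding hat_def using transfer(1) Lam_cont
  by (meson continuous_map_compose homeomorphic_maps_def)

text \<open>hat K L phi extends phi: on K, transfer is delta and Lam(phi) commutes with delta (Lam3).\<close>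
lemma hat_extends:
  assumes K: "K \<in> KK Om" and L: "L \<in> KK Om" and \<phi>: "\<phi> \<in> cmaps Om K L" and x: "x \<in> K"
  shows "hat K L \<phi> x = \<phi> x"
proof -
  have "\<phi> x \<in> L" using \<phi> x KK_subset[OF K] by (auto simp: cmaps_def continuous_map_def)
  moreover have "\<phi> x \<in> topspace Om" using calculation KK_subset[OF L] by blast
  ultimately show ?thesis
    using transfer(3)[OF K x] Lam3[OF K L \<phi> x] transfer(3)[OF L, symmetric] untransfer_transfer[OF L]
    by (simp add: hat_def)
qed

lemma hat_id:
  "\<lbrakk>L \<in> KK Om; x \<in> topspace Om\<rbrakk> \<Longrightarrow> hat L L (restrict id L) x = x"
  by (simp add: hat_def Lam1_id transfer_into untransfer_transfer)

lemma hat_comp: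
  assumes K: "K \<in> KK Om" and L: "L \<in> KK Om" and M: "M \<in> KK Om"
    and \<phi>: "\<phi> \<in> cmaps Om K L" and \<psi>: "\<psi> \<in> cmaps Om L M" and x: "x \<in> topspace Om"
  shows "hat K M (restrict (\<psi> \<circ> \<phi>) K) x = hat L M \<psi> (hat K L \<phi> x)"
  using Lam1_comp[OF K L M \<phi> \<psi> transfer_into[OF K x]]
    transfer_untransfer[OF L Lam_maps_into[OF K L \<phi> transfer_into[OF K x]]]
  by (simp add: hat_def)

text \<open>Metric part: pulling Lam(d) back along transfer L gives a compatible bounded metric on Om
  extending d, for which phi |-> hat K L phi is isometric by (Lam4) and (Lam5).\<close>
lemma extended_metric:
  fixes LamD :: "'a set \<Rightarrow> ('a \<Rightarrow> 'a \<Rightarrow> real) \<Rightarrow> ('a \<Rightarrow> 'a \<Rightarrow> real)"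
  assumes LamD_Metr: "\<And>K d. K \<in> KK Om \<Longrightarrow> d \<in> Metr (subtopology Om K) \<Longrightarrow> LamD K d \<in> Metr (LamT K)"
    and Lam4: "\<And>K d x y. K \<in> KK Om \<Longrightarrow> d \<in> Metr (subtopology Om K) \<Longrightarrow> x \<in> K \<Longrightarrow> y \<in> K \<Longrightarrow>
              d x y = LamD K d (delta K x) (delta K y)"
    and Lam5: "\<And>K L \<rho> \<psi> \<psi>'. K \<in> KK Om \<Longrightarrow> L \<in> KK Om \<Longrightarrow> \<rho> \<in> Metr (subtopology Om L) \<Longrightarrow>
              \<psi> \<in> cmaps Om K L \<Longrightarrow> \<psi>' \<in> cmaps Om K L \<Longrightarrow>
              sup_dist (LamD L \<rho>) (topspace (LamT K)) (LamM K L \<psi>) (LamM K L \<psi>') = sup_dist \<rho> K \<psi> \<psi>'"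
    and L: "L \<in> KK Om" and d: "d \<in> Metr (subtopology Om L)"
  shows "\<exists>dh\<in>Metr Om. (\<forall>x\<in>L. \<forall>y\<in>L. dh x y = d x y)
           \<and> (\<forall>K\<in>KK Om. \<forall>\<phi>\<in>cmaps Om K L. \<forall>\<phi>'\<in>cmaps Om K L.
                sup_dist dh (topspace Om) (hat K L \<phi>) (hat K L \<phi>') = sup_dist d K \<phi> \<phi>')"
proof (intro bexI conjI ballI)
  let ?dh = "\<lambda>x y. LamD L d (transfer L x) (transfer L y)"
  show "?dh \<in> Metr Om"
    using Metr_pullback[OF LamD_Metr[OF L d] homeomorphic_maps_imp_map[OF transfer(1)[OF L]]] .
  show "?dh x y = d x y" if "x \<in> L" "y \<in> L" for x y
    using that transfer(3)[OF L] Lam4[OF L d] by simp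
  fix K \<phi> \<phi>' assume K: "K \<in> KK Om" and \<phi>: "\<phi> \<in> cmaps Om K L" and \<phi>': "\<phi>' \<in> cmaps Om K L"
  have "sup_dist ?dh (topspace Om) (hat K L \<phi>) (hat K L \<phi>')
      = sup_dist (LamD L d) (topspace (LamT K)) (LamM K L \<phi>) (LamM K L \<phi>')"
    using transfer(2)[OF K]
  proof (rule sup_dist_reindex)
    fix x assume "x \<in> topspace Om"
    then show "?dh (hat K L \<phi> x) (hat K L \<phi>' x)
        = LamD L d (LamM K L \<phi> (transfer K x)) (LamM K L \<phi>' (transfer K x))"
      by (simp add: hat_def transfer_untransfer[OF L] Lam_maps_into[OF K L] \<phi> \<phi>' transfer_into[OF K])
  qed
  also have "\<dots> = sup_dist d K \<phi> \<phi>'" using Lam5[OF K L d \<phi> \<phi>'] .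
  finally show "sup_dist ?dh (topspace Om) (hat K L \<phi>) (hat K L \<phi>') = sup_dist d K \<phi> \<phi>'" .
qed

end

theorem mainTheorem2:
  fixes Om :: "'a topology"
    and KK :: "'a topology \<Rightarrow> 'a set set"
    and LamT :: "'a set \<Rightarrow> 'a topology"
    and LamM :: "'a set \<Rightarrow> 'a set \<Rightarrow> ('a \<Rightarrow> 'a) \<Rightarrow> ('a \<Rightarrow> 'a)"
    and delta :: "'a set \<Rightarrow> 'a \<Rightarrow> 'a"
  assumes KK_sub: "\<And>Om'. Om' homeomorphic_space Om \<Longrightarrow> KK Om' \<subseteq> Pow (topspace Om')"
    and AX1: "\<And>Om1 Om2 h A. Om1 homeomorphic_space Om \<Longrightarrow> Om2 homeomorphic_space Om \<Longrightarrow>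
              homeomorphic_map Om1 Om2 h \<Longrightarrow> A \<subseteq> topspace Om1 \<Longrightarrow>
              (A \<in> KK Om1 \<longleftrightarrow> h ` A \<in> KK Om2)"
    and AX2: "\<And>K1 K2. K1 \<in> KK Om \<Longrightarrow> K2 \<in> KK Om \<Longrightarrow>
              subtopology Om K1 homeomorphic_space subtopology Om K2 \<Longrightarrow>
              \<exists>h. homeomorphic_map Om Om h \<and> h ` K1 = K2"
    and Lam_cont: "\<And>K L f. K \<in> KK Om \<Longrightarrow> L \<in> KK Om \<Longrightarrow> f \<in> cmaps Om K L \<Longrightarrow>
              continuous_map (LamT K) (LamT L) (LamM K L f)"
    and delta_emb: "\<And>K. K \<in> KK Om \<Longrightarrow> embedding_map (subtopology Om K) (LamT K) (delta K)"
    and Lam1_id: "\<And>K x. K \<in> KK Om \<Longrightarrow> x \<in> topspace (LamT K) \<Longrightarrow>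
              LamM K K (restrict id K) x = x"
    and Lam1_comp: "\<And>K L M f g x. K \<in> KK Om \<Longrightarrow> L \<in> KK Om \<Longrightarrow> M \<in> KK Om \<Longrightarrow>
              f \<in> cmaps Om K L \<Longrightarrow> g \<in> cmaps Om L M \<Longrightarrow> x \<in> topspace (LamT K) \<Longrightarrow>
              LamM K M (restrict (g \<circ> f) K) x = LamM L M g (LamM K L f x)"
    and Lam2: "\<And>K. K \<in> KK Om \<Longrightarrow>
              LamT K homeomorphic_space Om \<and> delta K ` K \<in> KK (LamT K)"
    and Lam3: "\<And>K L f x. K \<in> KK Om \<Longrightarrow> L \<in> KK Om \<Longrightarrow> f \<in> cmaps Om K L \<Longrightarrow> x \<in> K \<Longrightarrow>
              LamM K L f (delta K x) = delta L (f x)"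
  shows "\<exists>hat :: 'a set \<Rightarrow> 'a set \<Rightarrow> ('a \<Rightarrow> 'a) \<Rightarrow> ('a \<Rightarrow> 'a).
     (\<forall>K\<in>KK Om. \<forall>L\<in>KK Om. \<forall>\<phi>\<in>cmaps Om K L.
         continuous_map Om Om (hat K L \<phi>) \<and> (\<forall>x\<in>K. hat K L \<phi> x = \<phi> x))
   \<and> (\<forall>L\<in>KK Om. \<forall>x\<in>topspace Om. hat L L (restrict id L) x = x)
   \<and> (\<forall>K\<in>KK Om. \<forall>L\<in>KK Om. \<forall>M\<in>KK Om. \<forall>\<phi>\<in>cmaps Om K L. \<forall>\<psi>\<in>cmaps Om L M.
         \<forall>x\<in>topspace Om. hat K M (restrict (\<psi> \<circ> \<phi>) K) x = hat L M \<psi> (hat K L \<phi> x))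
   \<and> (\<forall>LamD :: 'a set \<Rightarrow> ('a \<Rightarrow> 'a \<Rightarrow> real) \<Rightarrow> ('a \<Rightarrow> 'a \<Rightarrow> real).
        metrizable_space Om
        \<and> (\<forall>K\<in>KK Om. \<forall>d\<in>Metr (subtopology Om K). LamD K d \<in> Metr (LamT K))
        \<and> (\<forall>K\<in>KK Om. \<forall>d\<in>Metr (subtopology Om K). \<forall>x\<in>K. \<forall>y\<in>K.
              d x y = LamD K d (delta K x) (delta K y))
        \<and> (\<forall>K\<in>KK Om. \<forall>L\<in>KK Om. \<forall>\<rho>\<in>Metr (subtopology Om L).
              \<forall>\<psi>\<in>cmaps Om K L. \<forall>\<psi>'\<in>cmaps Om K L.
                sup_dist (LamD L \<rho>) (topspace (LamT K)) (LamM K L \<psi>) (LamM K L \<psi>')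
                  = sup_dist \<rho> K \<psi> \<psi>')
        \<longrightarrow> (\<forall>L\<in>KK Om. \<forall>d\<in>Metr (subtopology Om L).
              \<exists>dh\<in>Metr Om. (\<forall>x\<in>L. \<forall>y\<in>L. dh x y = d x y)
                \<and> (\<forall>K\<in>KK Om. \<forall>\<phi>\<in>cmaps Om K L. \<forall>\<phi>'\<in>cmaps Om K L.
                     sup_dist dh (topspace Om) (hat K L \<phi>) (hat K L \<phi>')
                       = sup_dist d K \<phi> \<phi>')))"
proof -
  interpret functorial_extension Om KK LamT LamM delta
    using assms by unfold_locales
  show ?thesis
    by (intro exI[of _ hat] conjI ballI allI impI)
      (auto intro!: hat_continuous hat_extends hat_id hat_comp extended_metric)
qed

end
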